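(* For every integer $n\geq 2$, $\dot{\imath}_{[1,2]}(P_2\Box P_n)=\left\lfloor \frac{n+2}{2}\right\rfloor$.
   Context: $P_k$ denotes the path on $k$ vertices and $P_m\Box P_n$ the Cartesian product of two paths (the $m\times n$ grid graph). A set $S$ of vertices of a graph $G$ is independent if no two vertices of $S$ are adjacent, and dominating if every vertex not in $S$ has at least one neighbor in $S$. An independent $[1,2]$-set of $G$ is an independent dominating set $S$ such that every vertex $v\in V(G)\setminus S$ has at least one and at most two neighbors in $S$. When $G$ has an independent $[1,2]$-set, $\dot{\imath}_{[1,2]}(G)$ denotes the minimum cardinality of an independent $[1,2]$-set of $G$ (the statement includes the existence of such a set). *)

theory Defs
  imports Main
begin

text \<open>Grid graph P_m box P_n: vertices (i,j) with i < m, j < n; (i,j) and (i',j') adjacent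
iff they agree in one coordinate and differ by exactly 1 in the other.\<close>
definition grid_vertices :: "nat \<Rightarrow> nat \<Rightarrow> (nat \<times> nat) set" where
  "grid_vertices m n = {0..<m} \<times> {0..<n}"

definition grid_adj :: "(nat \<times> nat) \<Rightarrow> (nat \<times> nat) \<Rightarrow> bool" where
  "grid_adj u v \<longleftrightarrow>
     (fst u = fst v \<and> (snd u = snd v + 1 \<or> snd v = snd u + 1)) \<or>
     (snd u = snd v \<and> (fst u = fst v + 1 \<or> fst v = fst u + 1))"

definition independent_set :: "'a set \<Rightarrow> ('a \<Rightarrow> 'a \<Rightarrow> bool) \<Rightarrow> 'a set \<Rightarrow> bool" where
  "independent_set V E S \<longleftrightarrow> S \<subseteq> V \<and> (\<forall>u\<in>S. \<forall>v\<in>S. \<not> E u v)"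

definition dominating_set :: "'a set \<Rightarrow> ('a \<Rightarrow> 'a \<Rightarrow> bool) \<Rightarrow> 'a set \<Rightarrow> bool" where
  "dominating_set V E S \<longleftrightarrow> S \<subseteq> V \<and> (\<forall>v\<in>V - S. \<exists>u\<in>S. E v u)"

definition indep_12_set :: "'a set \<Rightarrow> ('a \<Rightarrow> 'a \<Rightarrow> bool) \<Rightarrow> 'a set \<Rightarrow> bool" where
  "indep_12_set V E S \<longleftrightarrow> independent_set V E S \<and> dominating_set V E S \<and>
     (\<forall>v\<in>V - S. 1 \<le> card {u\<in>S. E v u} \<and> card {u\<in>S. E v u} \<le> 2)"

definition has_indep_12_set :: "'a set \<Rightarrow> ('a \<Rightarrow> 'a \<Rightarrow> bool) \<Rightarrow> bool" where
  "has_indep_12_set V E \<longleftrightarrow> (\<exists>S. indep_12_set V E S)"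

text \<open>Minimum cardinality of an independent [1,2]-set (meaningful when one exists and V is finite).\<close>
definition i12 :: "'a set \<Rightarrow> ('a \<Rightarrow> 'a \<Rightarrow> bool) \<Rightarrow> nat" where
  "i12 V E = (LEAST k. \<exists>S. indep_12_set V E S \<and> card S = k)"

end

theory Submission
  imports Defs
begin

text \<open>Let \<open>c j\<close> be the number of vertices of a dominating set \<open>S\<close> in column \<open>j\<close>. The two vertices
of an empty column must be dominated along their rows, so its neighbouring columns contribute at
least 2; hence \<open>c (j - 1) + c (j + 1) + 2 c j \<ge> 2\<close> for every column. Summed over all columns
this counts each \<open>c j\<close> four times, except at the two ends, and an empty first column forces
\<open>c 1 = 2\<close>; in either case \<open>4 |S| > 2 n\<close>, i.e. \<open>|S| \<ge> \<lfloor>(n + 2) / 2\<rfloor>\<close>. The bound is attained by the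
independent [1,2]-set taking \<open>(0, j)\<close> for \<open>j \<equiv> 0\<close> and \<open>(1, j)\<close> for \<open>j \<equiv> 2 (mod 4)\<close>, together with
one vertex of the last column when \<open>n\<close> is even.\<close>

lemma i12_eqI:
  assumes "indep_12_set V E S"
    and "\<And>T. indep_12_set V E T \<Longrightarrow> card S \<le> card T"
  shows "i12 V E = card S"
  unfolding i12_def using assms by (intro Least_equality) auto

lemma card_le_2_if_subset_three:
  assumes "A \<subseteq> {x, y, z}" and "\<not> {x, y, z} \<subseteq> A"
  shows "card A \<le> 2"
proof -
  obtain w where w: "w \<in> {x, y, z}" "w \<notin> A" using assms(2) by blast
  have "card A \<le> card ({x, y, z} - {w})"
    using assms(1) w by (intro card_mono) auto
  also have "\<dots> \<le> 2"
    using w by (auto simp: card_insert_if)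
  finally show ?thesis .
qed

lemma sum_flanks:
  fixes c :: "nat \<Rightarrow> nat"
  assumes "n = Suc m"
  shows "(\<Sum>j<n. (if 0 < j then c (j - 1) else 0) + (if j + 1 < n then c (j + 1) else 0))
           + c 0 + c m = 2 * (\<Sum>j<n. c j)"
proof -
  have left: "(\<Sum>j<Suc m. if 0 < j then c (j - 1) else 0) = (\<Sum>j<m. c j)"
    by (induction m) auto
  have "(\<Sum>j<Suc m. if j < m then c (j + 1) else 0) = (\<Sum>j<m. c (Suc j))"
    by (simp add: sum.lessThan_Suc)
  moreover have "(\<Sum>j<Suc m. c j) = c 0 + (\<Sum>j<m. c (Suc j))"
    by (rule sum.lessThan_Suc_shift)
  moreover have "(\<Sum>j<Suc m. c j) = (\<Sum>j<m. c j) + c m"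
    by (rule sum.lessThan_Suc)
  ultimately show ?thesis
    using left unfolding assms sum.distrib by simp
qed

lemma sum_ge_if_zeros_flanked:
  fixes c :: "nat \<Rightarrow> nat"
  assumes "2 \<le> n"
    and flanked: "\<And>j. j < n \<Longrightarrow> c j = 0 \<Longrightarrow>
      2 \<le> (if 0 < j then c (j - 1) else 0) + (if j + 1 < n then c (j + 1) else 0)"
  shows "(n + 2) div 2 \<le> (\<Sum>j<n. c j)"
proof -
  obtain m where n: "n = Suc m" using assms(1) by (cases n) auto
  define g where "g j = (if 0 < j then c (j - 1) else 0) + (if j + 1 < n then c (j + 1) else 0)
    + 2 * c j" for j
  have g_ge: "2 \<le> g j" if "j < n" for j
    using flanked[OF that] by (cases "c j = 0") (auto simp: g_def)
  have sum_g: "(\<Sum>j<n. g j) + c 0 + c m = 4 * (\<Sum>j<n. c j)"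
    using sum_flanks[OF n, of c] unfolding g_def sum.distrib sum_distrib_left[symmetric] by simp
  have "2 * n + 1 \<le> (\<Sum>j<n. g j) + c 0"
  proof (cases "c 0 = 0")
    case True
    have "2 \<le> c 1" using flanked[of 0] True assms(1) by auto
    then have "4 \<le> g 1" by (simp add: g_def)
    moreover have "2 * (n - 1) \<le> (\<Sum>j\<in>{..<n} - {1}. g j)"
      using sum_mono[of "{..<n} - {1}" "\<lambda>_. 2" g] g_ge assms(1) by simp
    moreover have "(\<Sum>j<n. g j) = g 1 + (\<Sum>j\<in>{..<n} - {1}. g j)"
      using assms(1) by (intro sum.remove) auto
    ultimately show ?thesis using assms(1) by linarith
  next
    case False
    have "2 * n \<le> (\<Sum>j<n. g j)"
      using sum_mono[of "{..<n}" "\<lambda>_. 2" g] g_ge by simp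
    then show ?thesis using False by linarith
  qed
  then have "2 * n + 1 \<le> 4 * (\<Sum>j<n. c j)" using sum_g by linarith
  then show ?thesis by presburger
qed

definition column_count :: "(nat \<times> nat) set \<Rightarrow> nat \<Rightarrow> nat" where
  "column_count S j = of_bool ((0, j) \<in> S) + of_bool ((1, j) \<in> S)"

lemma card_eq_sum_column_count:
  assumes "S \<subseteq> grid_vertices 2 n"
  shows "card S = (\<Sum>j<n. column_count S j)"
proof -
  have "finite (grid_vertices 2 n)" by (simp add: grid_vertices_def)
  then have "card S = (\<Sum>v\<in>grid_vertices 2 n. of_bool (v \<in> S))"
    using assms by (simp add: Int_absorb1)
  also have "\<dots> = (\<Sum>j<n. \<Sum>i<2. of_bool ((i, j) \<in> S))"
    unfolding grid_vertices_def atLeast0LessThan sum.cartesian_product' by (rule sum.swap)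
  also have "\<dots> = (\<Sum>j<n. column_count S j)"
    by (simp add: column_count_def numeral_2_eq_2)
  finally show ?thesis .
qed

lemma ladder_adj_cases:
  assumes "grid_adj (i, j) (a, b)" and "i < 2" and "a < 2"
  shows "(a, b) = (1 - i, j) \<or> (0 < j \<and> (a, b) = (i, j - 1)) \<or> (a, b) = (i, j + 1)"
  using assms unfolding grid_adj_def by auto

theorem ladder_dominating_card_ge:
  assumes "2 \<le> n" and dom: "dominating_set (grid_vertices 2 n) grid_adj S"
  shows "(n + 2) div 2 \<le> card S"
proof -
  have S: "S \<subseteq> grid_vertices 2 n" using dom by (simp add: dominating_set_def)
  have row_dominated:
    "(1::nat) \<le> of_bool (0 < j \<and> (i, j - 1) \<in> S) + of_bool (j + 1 < n \<and> (i, j + 1) \<in> S)"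
    if "i < 2" "j < n" "(i, j) \<notin> S" "(1 - i, j) \<notin> S" for i j
  proof -
    have "(i, j) \<in> grid_vertices 2 n - S" using that by (simp add: grid_vertices_def)
    then obtain u where "u \<in> S" "grid_adj (i, j) u"
      using dom unfolding dominating_set_def by blast
    then obtain a b where ab: "(a, b) \<in> S" "grid_adj (i, j) (a, b)" by (cases u) auto
    have "a < 2" "b < n" using ab S by (auto simp: grid_vertices_def)
    then show ?thesis using ladder_adj_cases[OF ab(2)] ab that by auto
  qed
  have "(n + 2) div 2 \<le> (\<Sum>j<n. column_count S j)"
  proof (rule sum_ge_if_zeros_flanked[OF assms(1)])
    fix j assume j: "j < n" "column_count S j = 0"
    then have "(0, j) \<notin> S" "(1, j) \<notin> S" by (auto simp: column_count_def)
    then have "(1::nat) \<le> of_bool (0 < j \<and> (0, j - 1) \<in> S) + of_bool (j + 1 < n \<and> (0, j + 1) \<in> S)"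
      and "(1::nat) \<le> of_bool (0 < j \<and> (1, j - 1) \<in> S) + of_bool (j + 1 < n \<and> (1, j + 1) \<in> S)"
      using row_dominated[of 0 j] row_dominated[of 1 j] j by simp_all
    moreover have "(if 0 < j then column_count S (j - 1) else 0)
        + (if j + 1 < n then column_count S (j + 1) else 0)
      = (of_bool (0 < j \<and> (0, j - 1) \<in> S) + of_bool (j + 1 < n \<and> (0, j + 1) \<in> S))
        + (of_bool (0 < j \<and> (1, j - 1) \<in> S) + of_bool (j + 1 < n \<and> (1, j + 1) \<in> S))"
      by (simp add: column_count_def)
    ultimately show "2 \<le> (if 0 < j then column_count S (j - 1) else 0)
                 + (if j + 1 < n then column_count S (j + 1) else 0)"
      by linarith
  qed
  then show ?thesis using card_eq_sum_column_count[OF S] by simp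
qed

definition zigzag :: "nat \<Rightarrow> nat \<Rightarrow> nat \<Rightarrow> bool" where
  "zigzag n i j \<longleftrightarrow> j mod 4 = 2 * i \<or> (j + 1 = n \<and> n mod 4 = 2 * i)"

definition zigzag_set :: "nat \<Rightarrow> (nat \<times> nat) set" where
  "zigzag_set n = {(i, j). i < 2 \<and> j < n \<and> zigzag n i j}"

lemma mod4_cases: "j mod 4 = 0 \<or> j mod 4 = 1 \<or> j mod 4 = 2 \<or> j mod 4 = (3::nat)"
  by arith

lemma zigzag_not_consecutive:
  assumes "i < 2" and "j + 1 < n"
  shows "\<not> (zigzag n i j \<and> zigzag n i (j + 1))"
  using assms mod4_cases[of j] unfolding zigzag_def less_2_cases_iff by (auto simp: mod_Suc)

lemma zigzag_not_both_rows: "\<not> (zigzag n 0 j \<and> zigzag n 1 j)"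
  using mod4_cases[of j] unfolding zigzag_def by (auto simp: mod_Suc dvd_eq_mod_eq_0)

lemma zigzag_not_three:
  assumes "i < 2" and "j + 1 < n"
  shows "\<not> (zigzag n (1 - i) j \<and> zigzag n i (j - 1) \<and> zigzag n i (j + 1))"
  using assms mod4_cases[of j] unfolding zigzag_def less_2_cases_iff by (cases j) (auto simp: mod_Suc)

lemma zigzag_dominates:
  assumes "i < 2" and "j < n" and "\<not> zigzag n i j"
  shows "zigzag n (1 - i) j \<or> (0 < j \<and> zigzag n i (j - 1)) \<or> (j + 1 < n \<and> zigzag n i (j + 1))"
proof (cases j)
  case (Suc k)
  then show ?thesis using assms mod4_cases[of k] unfolding zigzag_def less_2_cases_iff
    by (cases "k + 2 = n") (auto simp: mod_Suc)
qed (use assms in \<open>auto simp: zigzag_def\<close>)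

lemma zigzag_column:
  "of_bool (zigzag n 0 j) + of_bool (zigzag n 1 j) =
    of_bool (even j) + (of_bool (j + 1 = n \<and> even n) :: nat)"
proof -
  have "even j \<longleftrightarrow> j mod 4 = 0 \<or> j mod 4 = 2" by presburger
  moreover have "even (Suc j) \<longleftrightarrow> \<not> even j" by simp
  ultimately show ?thesis
    using mod4_cases[of j] unfolding zigzag_def by (cases "j + 1 = n") (auto simp: mod_Suc)
qed

lemma zigzag_set_mem: "(i, j) \<in> zigzag_set n \<longleftrightarrow> i < 2 \<and> j < n \<and> zigzag n i j"
  by (simp add: zigzag_set_def)

lemma zigzag_set_subset: "zigzag_set n \<subseteq> grid_vertices 2 n"
  by (auto simp: zigzag_set_def grid_vertices_def)

lemma column_count_zigzag_set:
  assumes "j < n"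
  shows "column_count (zigzag_set n) j = of_bool (even j) + of_bool (j + 1 = n \<and> even n)"
  using assms zigzag_column[of n j] by (simp add: column_count_def zigzag_set_mem)

lemma independent_zigzag_set: "independent_set (grid_vertices 2 n) grid_adj (zigzag_set n)"
  unfolding independent_set_def
proof (intro conjI zigzag_set_subset ballI notI)
  fix u v assume "u \<in> zigzag_set n" "v \<in> zigzag_set n" "grid_adj u v"
  then obtain i j a b where uv: "u = (i, j)" "v = (a, b)" "i < 2" "a < 2" "j < n" "b < n"
      "zigzag n i j" "zigzag n a b" "grid_adj (i, j) (a, b)"
    by (cases u, cases v) (auto simp: zigzag_set_mem)
  then consider "a = 1 - i" "b = j" | "a = i" "j = b + 1" | "a = i" "b = j + 1"
    using ladder_adj_cases[of i j a b] by fastforce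
  then show False
    using uv zigzag_not_consecutive[of i b n] zigzag_not_consecutive[of i j n]
      zigzag_not_both_rows[of n j] less_2_cases_iff[of i] by cases auto
qed

lemma zigzag_set_neighbours:
  assumes v: "v \<in> grid_vertices 2 n - zigzag_set n"
  shows "1 \<le> card {u \<in> zigzag_set n. grid_adj v u} \<and> card {u \<in> zigzag_set n. grid_adj v u} \<le> 2"
proof -
  obtain i j where ij: "v = (i, j)" "i < 2" "j < n" "\<not> zigzag n i j"
    using v by (cases v) (auto simp: grid_vertices_def zigzag_set_mem)
  let ?N = "{u \<in> zigzag_set n. grid_adj v u}"
  have fin: "finite ?N"
    by (rule finite_subset[of _ "grid_vertices 2 n"])
      (use zigzag_set_subset in \<open>auto simp: grid_vertices_def\<close>)
  have "(1 - i, j) \<in> ?N \<or> (i, j - 1) \<in> ?N \<or> (i, j + 1) \<in> ?N"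
    using zigzag_dominates[OF ij(2-4)] ij
    by (auto simp: zigzag_set_mem grid_adj_def less_2_cases_iff)
  then have "?N \<noteq> {}" by blast
  with fin have "1 \<le> card ?N" by (simp add: Suc_le_eq card_gt_0_iff)
  moreover have "card ?N \<le> 2"
  proof (rule card_le_2_if_subset_three)
    show "?N \<subseteq> {(1 - i, j), (i, j - 1), (i, j + 1)}"
      using ladder_adj_cases ij by (force simp: zigzag_set_def)
    show "\<not> {(1 - i, j), (i, j - 1), (i, j + 1)} \<subseteq> ?N"
      using zigzag_not_three[of i j n] ij by (auto simp: zigzag_set_mem)
  qed
  ultimately show ?thesis by blast
qed

lemma indep_12_zigzag_set: "indep_12_set (grid_vertices 2 n) grid_adj (zigzag_set n)"
proof -
  have "dominating_set (grid_vertices 2 n) grid_adj (zigzag_set n)"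
    unfolding dominating_set_def
  proof (intro conjI zigzag_set_subset ballI)
    fix v assume "v \<in> grid_vertices 2 n - zigzag_set n"
    then have "0 < card {u \<in> zigzag_set n. grid_adj v u}"
      using zigzag_set_neighbours by (simp add: Suc_le_eq)
    then have "{u \<in> zigzag_set n. grid_adj v u} \<noteq> {}"
      by (simp add: card_gt_0_iff)
    then show "\<exists>u\<in>zigzag_set n. grid_adj v u" by blast
  qed
  then show ?thesis
    unfolding indep_12_set_def using independent_zigzag_set zigzag_set_neighbours by blast
qed

lemma card_zigzag_set:
  assumes "1 \<le> n"
  shows "card (zigzag_set n) = (n + 2) div 2"
proof -
  obtain m where n: "n = Suc m" using assms by (cases n) auto
  have "card (zigzag_set n) = (\<Sum>j<n. of_bool (even j) + of_bool (j + 1 = n \<and> even n))"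
    unfolding card_eq_sum_column_count[OF zigzag_set_subset]
    by (intro sum.cong) (simp_all add: column_count_zigzag_set)
  also have "\<dots> = (\<Sum>j<n. of_bool (even j)) + of_bool (even n)"
    by (simp add: n sum.distrib)
  also have "(\<Sum>j<n. of_bool (even j) :: nat) = (n + 1) div 2"
    by (induction n) auto
  finally show ?thesis by (auto elim!: evenE oddE)
qed

theorem mainTheorem3:
  fixes n :: nat
  assumes "n \<ge> 2"
  shows "has_indep_12_set (grid_vertices 2 n) grid_adj \<and>
         i12 (grid_vertices 2 n) grid_adj = (n + 2) div 2"
proof
  show "has_indep_12_set (grid_vertices 2 n) grid_adj"
    unfolding has_indep_12_set_def using indep_12_zigzag_set by blast
  have "i12 (grid_vertices 2 n) grid_adj = card (zigzag_set n)"
  proof (rule i12_eqI[OF indep_12_zigzag_set])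
    fix T assume "indep_12_set (grid_vertices 2 n) grid_adj T"
    then have "dominating_set (grid_vertices 2 n) grid_adj T" by (simp add: indep_12_set_def)
    then show "card (zigzag_set n) \<le> card T"
      using ladder_dominating_card_ge assms card_zigzag_set by simp
  qed
  then show "i12 (grid_vertices 2 n) grid_adj = (n + 2) div 2"
    using card_zigzag_set assms by simp
qed

end
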